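(* Let $|q|<1$ and let $(\alpha_n(a,q),\beta_n(a,q))$ be sequences depending on $a$ and base $q$ such that $(\alpha_n(a,q),\beta_n(a,q))$ and $(\alpha_n(-a,q),\beta_n(-a,q))$ are Bailey pairs with respect to $a$ and $-a$ respectively (base $q$), and $(\alpha_n(a^2,q^2),\beta_n(a^2,q^2))$ is a Bailey pair with respect to $a^2$ with base $q^2$. Assume $|qa|<|z|$, no denominator vanishes, and all series converge absolutely. Then \begin{multline*} \sum_{n=1}^{\infty} (z;q)_{n}(q;q)_{n-1} \left( \frac{q a}{ z}\right )^{n} \beta_n(a,q) + \sum_{n=1}^{\infty}(z;q)_{n}(q;q)_{n-1}\left( \frac{-q a}{ z }\right )^{n}\beta_n(-a,q) -2 \sum_{n=1}^{\infty}(z^2;q^2)_{n}(q^2;q^2)_{n-1}\left( \frac{q^2 a^2}{ z^2 }\right )^{n}\beta_n(a^2,q^2)\\ =\sum_{n=1}^{\infty}\frac{(z;q)_{n}(q;q)_{n-1}}{(q a ,q a/z;q)_n}\left (\frac{q a}{z}\right)^{n}\alpha_n(a,q) +\sum_{n=1}^{\infty}\frac{(z;q)_{n}(q;q)_{n-1}}{(-q a ,-q a/z;q)_n}\left (\frac{-q a}{z}\right)^{n}\alpha_n(-a,q) -2\sum_{n=1}^{\infty}\frac{(z^2;q^2)_{n}(q^2;q^2)_{n-1}}{(q^2 a^2 ,q^2a^2/z^2;q^2)_n}\left (\frac{q^2a^2}{z^2}\right)^{n}\alpha_n(a^2,q^2). \end{multline*}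
   Context: Notation: $(x;q)_n=(1-x)(1-xq)\cdots(1-xq^{n-1})$, $(x;q)_0=1$, $(x_1,\dots,x_m;q)_n=(x_1;q)_n\cdots(x_m;q)_n$. A Bailey pair with respect to $a$ (base $q$) is a pair of sequences $(\alpha_n,\beta_n)_{n\ge0}$ with $\alpha_0=\beta_0=1$ and, for $n>0$, $\beta_n=\sum_{j=0}^{n}\frac{\alpha_j}{(q;q)_{n-j}(aq;q)_{n+j}}$. *)

theory Defs
  imports "HOL-Analysis.Analysis"
begin

definition qpoch :: "complex \<Rightarrow> complex \<Rightarrow> nat \<Rightarrow> complex" where
  "qpoch x q n = (\<Prod>k<n. (1 - x * q ^ k))"

definition bailey_pair :: "complex \<Rightarrow> complex \<Rightarrow> (nat \<Rightarrow> complex) \<Rightarrow> (nat \<Rightarrow> complex) \<Rightarrow> bool" where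
  "bailey_pair a q \<alpha> \<beta> \<longleftrightarrow> \<alpha> 0 = 1 \<and> \<beta> 0 = 1 \<and>
     (\<forall>n>0. \<beta> n = (\<Sum>j\<le>n. \<alpha> j / (qpoch q q (n - j) * qpoch (a * q) q (n + j))))"

definition bterm :: "complex \<Rightarrow> complex \<Rightarrow> complex \<Rightarrow> (nat \<Rightarrow> complex) \<Rightarrow> nat \<Rightarrow> complex" where
  "bterm z a q \<beta> n = qpoch z q n * qpoch q q (n - 1) * (q * a / z) ^ n * \<beta> n"

definition aterm :: "complex \<Rightarrow> complex \<Rightarrow> complex \<Rightarrow> (nat \<Rightarrow> complex) \<Rightarrow> nat \<Rightarrow> complex" where
  "aterm z a q \<alpha> n = qpoch z q n * qpoch q q (n - 1) / (qpoch (q * a) q n * qpoch (q * a / z) q n)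
      * (q * a / z) ^ n * \<alpha> n"

end

theory Submission
  imports Defs
begin

text \<open>
  Expanding \<open>\<beta>\<^sub>n\<close> by the Bailey relation and interchanging the summations, the \<open>\<beta>\<close>-side series
  becomes \<open>\<Sum>\<^sub>j \<alpha>\<^sub>j \<Sum>\<^sub>m K\<^sub>j(m)\<close>, where \<open>K\<^sub>j(m)\<close> (\<open>bailey_kernel\<close>) is the coefficient of \<open>\<alpha>\<^sub>j\<close> in the term of
  index \<open>j + m\<close>. For \<open>j \<ge> 1\<close> the inner series is a \<open>\<^sub>2\<phi>\<^sub>1\<close> at the q-Gauss point and sums to the
  coefficient of \<open>\<alpha>\<^sub>j\<close> on the \<open>\<alpha>\<close>-side; this is proved by induction on \<open>j\<close>, each step being a
  telescoping identity in \<open>m\<close>. What remains is the contribution \<open>S(a)\<close> of \<open>\<alpha>\<^sub>0 = 1\<close>.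
  Since \<open>S(a) - S(aq)\<close> is again a q-Gauss sum, \<open>S(a) = \<Sum>\<^sub>k c(aq\<^sup>k)\<close> with
  \<open>c(b) = (1 - z)y / ((1 - zy)(1 - y)) = y/(1 - y) - zy/(1 - zy)\<close>, \<open>y = qb/z\<close> (\<open>alpha_coeff b q z 1\<close>).
  The partial fractions give \<open>c(b) + c(-b) = 2 c(b\<^sup>2)\<close>, the last taken with base \<open>q\<^sup>2\<close> and \<open>z\<^sup>2\<close>,
  so the \<open>\<alpha>\<^sub>0\<close>-contributions cancel in the combination of the theorem.
\<close>

lemma qpoch_0 [simp]: "qpoch w q 0 = 1"
  by (simp add: qpoch_def)

lemma qpoch_Suc: "qpoch w q (Suc n) = qpoch w q n * (1 - w * q ^ n)"
  by (simp add: qpoch_def)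

lemma qpoch_add: "qpoch w q (m + n) = qpoch w q m * qpoch (w * q ^ m) q n"
  by (induct n) (simp_all add: qpoch_Suc power_add mult_ac)

lemma norm_qpoch_le:
  assumes q: "norm q < 1" and w: "norm w \<le> R"
  shows "norm (qpoch w q n) \<le> exp (R / (1 - norm q))"
proof -
  have R: "0 \<le> R"
    using w norm_ge_zero order_trans by blast
  have factor_le: "norm (1 - w * q ^ k) \<le> exp (R * norm q ^ k)" for k
  proof -
    have "norm (1 - w * q ^ k) \<le> 1 + norm w * norm q ^ k"
      by (metis norm_mult norm_one norm_power norm_triangle_ineq4)
    also have "\<dots> \<le> 1 + R * norm q ^ k"
      using w by (simp add: mult_right_mono)
    also have "\<dots> \<le> exp (R * norm q ^ k)"
      by (rule exp_ge_add_one_self)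
    finally show ?thesis .
  qed
  have "norm (qpoch w q n) \<le> (\<Prod>k<n. exp (R * norm q ^ k))"
    unfolding qpoch_def by (intro order_trans[OF norm_prod_le] prod_mono) (auto intro: factor_le)
  also have "\<dots> = exp (\<Sum>k<n. R * norm q ^ k)"
    by (simp add: exp_sum)
  also have "(\<Sum>k<n. R * norm q ^ k) = R * (1 - norm q ^ n) / (1 - norm q)"
    using q by (simp add: sum_distrib_left[symmetric] sum_gp_strict)
  also have "\<dots> \<le> R / (1 - norm q)"
    using q R by (intro divide_right_mono mult_left_le) auto
  finally show ?thesis by simp
qed

lemma qpoch_bounded_below:
  assumes q: "norm q < 1" and nz: "\<And>n. qpoch w q n \<noteq> 0"
  obtains L where "L > 0" "\<And>n. L \<le> norm (qpoch w q n)"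
proof -
  have "summable (\<lambda>k. norm ((1 - w * q ^ k) - 1))"
    using q by (simp add: norm_mult norm_power summable_mult summable_geometric)
  then have conv: "convergent_prod (\<lambda>k. 1 - w * q ^ k)"
    by (intro abs_convergent_prod_imp_convergent_prod summable_imp_abs_convergent_prod)
  have "1 - w * q ^ k \<noteq> 0" for k
    using nz[of "Suc k"] by (simp add: qpoch_Suc)
  with conv have "prodinf (\<lambda>k. 1 - w * q ^ k) \<noteq> 0"
    by (rule prodinf_nonzero)
  moreover have "(\<lambda>n. qpoch w q n) \<longlonglongrightarrow> prodinf (\<lambda>k. 1 - w * q ^ k)"
    unfolding qpoch_def using conv by (intro has_prod_imp_tendsto' convergent_prod_has_prod)
  ultimately have "Bseq (\<lambda>n. inverse (qpoch w q n))"
    by (intro Bfun_inverse)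
  then obtain K where K: "K > 0" "\<And>n. norm (inverse (qpoch w q n)) \<le> K"
    by (auto elim: BseqE)
  have "1 / K \<le> norm (qpoch w q n)" for n
    using K(1) K(2)[of n] nz[of n] by (simp add: norm_inverse norm_divide divide_simps mult.commute)
  with K(1) show ?thesis by (intro that[of "1 / K"]) auto
qed

lemma qpoch_self_nonzero:
  assumes "norm q < 1"
  shows "qpoch q q n \<noteq> 0"
proof -
  have "norm (q * q ^ k) < 1" for k
    using assms by (simp add: norm_mult norm_power power_less_one_iff flip: power_Suc)
  then have "1 - q * q ^ k \<noteq> 0" for k
    by (metis eq_iff_diff_eq_0 norm_one order_less_irrefl)
  then show ?thesis
    unfolding qpoch_def by simp
qed

lemma sum_triangle_swap:
  fixes g :: "nat \<Rightarrow> nat \<Rightarrow> 'a::comm_monoid_add"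
  shows "(\<Sum>k<N. \<Sum>i\<le>k. g i (k - i)) = (\<Sum>i<N. \<Sum>m<N - i. g i m)"
proof -
  have "{(i, m). i + m < N} = Sigma {..<N} (\<lambda>i. {..<N - i})"
    by auto
  then show ?thesis
    by (simp add: sum.triangle_reindex[symmetric] sum.Sigma)
qed

lemma convolution_geometric_tendsto_0:
  fixes c :: "nat \<Rightarrow> real"
  assumes "summable c" "\<And>i. 0 \<le> c i" "0 \<le> r" "r < 1"
  shows "(\<lambda>N. \<Sum>i\<le>N. c i * r ^ (N - i)) \<longlonglongrightarrow> 0"
proof -
  have "(\<lambda>N. \<Sum>i\<le>N. c i * r ^ (N - i)) sums ((\<Sum>i. c i) * (\<Sum>i. r ^ i))"
    using assms by (intro Cauchy_product_sums) (auto intro: summable_geometric)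
  then show ?thesis
    by (intro summable_LIMSEQ_zero sums_summable)
qed


definition bailey_kernel :: "complex \<Rightarrow> complex \<Rightarrow> complex \<Rightarrow> nat \<Rightarrow> nat \<Rightarrow> complex" where
  "bailey_kernel a q z j m =
     qpoch z q (j + m) * qpoch q q (j + m - 1) * (q * a / z) ^ (j + m)
       / (qpoch q q m * qpoch (a * q) q (2 * j + m))"

definition alpha_coeff :: "complex \<Rightarrow> complex \<Rightarrow> complex \<Rightarrow> nat \<Rightarrow> complex" where
  "alpha_coeff a q z j =
     qpoch z q j * qpoch q q (j - 1) * (q * a / z) ^ j / (qpoch (q * a) q j * qpoch (q * a / z) q j)"

definition alpha_coeff_ratio :: "complex \<Rightarrow> complex \<Rightarrow> complex \<Rightarrow> nat \<Rightarrow> complex" where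
  "alpha_coeff_ratio a q z j =
     (1 - z * q ^ j) * (1 - q ^ j) * (q * a / z) / ((1 - a * q * q ^ j) * (1 - q * a / z * q ^ j))"

definition gauss_certificate :: "complex \<Rightarrow> complex \<Rightarrow> complex \<Rightarrow> nat \<Rightarrow> nat \<Rightarrow> complex" where
  "gauss_certificate a q z j m =
     (alpha_coeff_ratio a q z j - 1) / (q * a / z - 1) * bailey_kernel a q z j m * (1 - q ^ m)"

lemma aterm_eq_alpha_coeff: "aterm z a q \<alpha> n = \<alpha> n * alpha_coeff a q z n"
  unfolding aterm_def alpha_coeff_def by (simp add: divide_inverse mult_ac)

lemma bterm_eq_kernel_sum:
  assumes "bailey_pair a q \<alpha> \<beta>" "0 < n"
  shows "bterm z a q \<beta> n = (\<Sum>j\<le>n. \<alpha> j * bailey_kernel a q z j (n - j))"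
proof -
  define P where "P = qpoch z q n * qpoch q q (n - 1) * (q * a / z) ^ n"
  have "bterm z a q \<beta> n = (\<Sum>j\<le>n. P * (\<alpha> j / (qpoch q q (n - j) * qpoch (a * q) q (n + j))))"
    using assms unfolding bterm_def bailey_pair_def P_def by (simp add: sum_distrib_left)
  also have "\<dots> = (\<Sum>j\<le>n. \<alpha> j * bailey_kernel a q z j (n - j))"
    by (rule sum.cong) (auto simp: bailey_kernel_def P_def add.commute)
  finally show ?thesis .
qed

lemma bterm_partial_sum:
  assumes pair: "bailey_pair a q \<alpha> \<beta>"
  shows "(\<Sum>k<N. bterm z a q \<beta> (Suc k))
    = (\<Sum>k<N. bailey_kernel a q z 0 (Suc k)) + (\<Sum>i<N. aterm z a q \<alpha> (Suc i))
      - (\<Sum>i<N. \<alpha> (Suc i) * (alpha_coeff a q z (Suc i) - (\<Sum>m<N - i. bailey_kernel a q z (Suc i) m)))"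
proof -
  have "bterm z a q \<beta> (Suc k)
      = bailey_kernel a q z 0 (Suc k) + (\<Sum>i\<le>k. \<alpha> (Suc i) * bailey_kernel a q z (Suc i) (k - i))" for k
    using bterm_eq_kernel_sum[OF pair, of "Suc k"] pair unfolding sum.atMost_Suc_shift
    by (simp add: bailey_pair_def del: sum.atMost_Suc)
  then have "(\<Sum>k<N. bterm z a q \<beta> (Suc k))
      = (\<Sum>k<N. bailey_kernel a q z 0 (Suc k))
        + (\<Sum>k<N. \<Sum>i\<le>k. \<alpha> (Suc i) * bailey_kernel a q z (Suc i) (k - i))"
    by (simp add: sum.distrib)
  also have "(\<Sum>k<N. \<Sum>i\<le>k. \<alpha> (Suc i) * bailey_kernel a q z (Suc i) (k - i))
      = (\<Sum>i<N. \<Sum>m<N - i. \<alpha> (Suc i) * bailey_kernel a q z (Suc i) m)"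
    by (rule sum_triangle_swap)
  also have "\<dots> = (\<Sum>i<N. aterm z a q \<alpha> (Suc i)
      - \<alpha> (Suc i) * (alpha_coeff a q z (Suc i) - (\<Sum>m<N - i. bailey_kernel a q z (Suc i) m)))"
    by (rule sum.cong) (simp_all add: aterm_eq_alpha_coeff sum_distrib_left algebra_simps)
  finally show ?thesis
    by (simp add: sum_subtractf)
qed

lemma alpha_coeff_Suc:
  "alpha_coeff a q z (Suc (Suc i)) = alpha_coeff a q z (Suc i) * alpha_coeff_ratio a q z (Suc i)"
  by (simp add: alpha_coeff_def alpha_coeff_ratio_def qpoch_Suc mult_ac)

locale bailey_setup =
  fixes a q z :: complex
  assumes norm_q_less_1: "norm q < 1"
    and norm_qa_less: "norm (q * a) < norm z"
    and qpoch_aq_nonzero: "\<And>n. qpoch (a * q) q n \<noteq> 0"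
    and qpoch_x_nonzero: "\<And>n. qpoch (q * a / z) q n \<noteq> 0"
begin

lemma z_nonzero [simp]: "z \<noteq> 0"
  using norm_qa_less by auto

lemma norm_x_less_1: "norm (q * a / z) < 1"
  using norm_qa_less by (simp add: norm_divide divide_less_eq)

lemma x_minus_1_nonzero: "q * a / z - 1 \<noteq> 0"
  using norm_x_less_1 by (metis norm_one order_less_irrefl right_minus_eq)

lemma qpoch_q_q_nonzero [simp]: "qpoch q q n \<noteq> 0"
  using norm_q_less_1 by (rule qpoch_self_nonzero)

lemma qpoch_parameters_nonzero [simp]:
  "qpoch (a * q) q n \<noteq> 0" "qpoch (q * a) q n \<noteq> 0" "qpoch (q * a / z) q n \<noteq> 0" "qpoch (a * q / z) q n \<noteq> 0"
  using qpoch_aq_nonzero[of n] qpoch_x_nonzero[of n] by (simp_all add: mult.commute)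

lemma one_minus_q_nonzero: "1 - q * q ^ k \<noteq> 0"
  using qpoch_q_q_nonzero[of "Suc k"] by (simp add: qpoch_Suc)

lemma one_minus_aq_nonzero: "1 - a * q * q ^ k \<noteq> 0"
  using qpoch_aq_nonzero[of "Suc k"] by (simp add: qpoch_Suc)

lemma one_minus_x_nonzero: "1 - q * a / z * q ^ k \<noteq> 0"
  using qpoch_x_nonzero[of "Suc k"] by (simp add: qpoch_Suc)

lemma bailey_kernel_Suc:
  "bailey_kernel a q z (Suc i) (Suc m) = bailey_kernel a q z (Suc i) m *
     ((1 - z * q ^ (Suc i + m)) * (1 - q * q ^ (i + m)) * (q * a / z)
       / ((1 - q * q ^ m) * (1 - a * q * q ^ (2 * Suc i + m))))"
proof -
  have "Suc i + Suc m = Suc (Suc i + m)" "2 * Suc i + Suc m = Suc (2 * Suc i + m)"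
    by simp_all
  then show ?thesis
    using one_minus_q_nonzero[of m] one_minus_aq_nonzero[of "2 * Suc i + m"]
    by (simp add: bailey_kernel_def qpoch_Suc field_simps)
qed

lemma bailey_kernel_Suc_left:
  "bailey_kernel a q z (Suc j) m
     = bailey_kernel a q z j (Suc m) * (1 - q * q ^ m) / (1 - a * q * q ^ (2 * j + Suc m))"
proof -
  define N where "N = qpoch z q (j + Suc m) * qpoch q q (j + m) * (q * a / z) ^ (j + Suc m)"
  have "Suc j + m = j + Suc m" "2 * Suc j + m = Suc (2 * j + Suc m)"
    by simp_all
  then have left: "bailey_kernel a q z (Suc j) m
      = N / (qpoch q q m * (qpoch (a * q) q (2 * j + Suc m) * (1 - a * q * q ^ (2 * j + Suc m))))"
    unfolding bailey_kernel_def N_def by (simp add: qpoch_Suc)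
  have right: "bailey_kernel a q z j (Suc m)
      = N / (qpoch q q m * (1 - q * q ^ m) * qpoch (a * q) q (2 * j + Suc m))"
    unfolding bailey_kernel_def N_def by (simp add: qpoch_Suc)
  show ?thesis
    unfolding left right using one_minus_q_nonzero[of m] by (simp add: divide_simps)
qed

lemma gauss_certificate_telescope:
  "alpha_coeff_ratio a q z (Suc i) * bailey_kernel a q z (Suc i) (Suc m) - bailey_kernel a q z (Suc (Suc i)) m
     = gauss_certificate a q z (Suc i) (Suc (Suc m)) - gauss_certificate a q z (Suc i) (Suc m)"
proof -
  define v u where "v = q ^ i" and "u = q ^ m"
  define S where "S = bailey_kernel a q z (Suc i) (Suc m)"
  define \<rho> where "\<rho> = alpha_coeff_ratio a q z (Suc i)"
  define R1 where
    "R1 = (1 - z * q^2 * v * u) * (1 - q^2 * v * u) * (q * a / z) / ((1 - q^2 * u) * (1 - a * q^4 * v^2 * u))"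
  define R2 where "R2 = (1 - q * u) / (1 - a * q^4 * v^2 * u)"
  have next_m: "bailey_kernel a q z (Suc i) (Suc (Suc m)) = S * R1"
    using bailey_kernel_Suc[of i "Suc m"]
    by (simp add: S_def R1_def v_def u_def power_add power_mult power2_eq_square power4_eq_xxxx power_Suc mult_ac)
  have next_j: "bailey_kernel a q z (Suc (Suc i)) m = S * R2"
    using bailey_kernel_Suc_left[of "Suc i" m]
    by (simp add: S_def R2_def v_def u_def power_add power_mult power2_eq_square power4_eq_xxxx power_Suc mult_ac)
  have nz: "1 - a * q^2 * v \<noteq> 0" "1 - q * a / z * q * v \<noteq> 0" "1 - q^2 * u \<noteq> 0" "1 - a * q^4 * v^2 * u \<noteq> 0"
    using one_minus_aq_nonzero[of "Suc i"] one_minus_x_nonzero[of "Suc i"] one_minus_q_nonzero[of "Suc m"]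
      one_minus_aq_nonzero[of "2 * Suc i + Suc m"]
    by (simp_all add: v_def u_def power_add power_mult power2_eq_square power4_eq_xxxx power_Suc mult_ac)
  define \<kappa> where "\<kappa> = (\<rho> - 1) / (q * a / z - 1)"
  have scalar: "\<rho> - R2 = \<kappa> * (R1 * (1 - q ^ Suc (Suc m)) - (1 - q ^ Suc m))"
    using nz x_minus_1_nonzero
    unfolding \<kappa>_def \<rho>_def alpha_coeff_ratio_def R1_def R2_def
    apply (simp add: divide_simps power2_eq_square power_Suc flip: v_def u_def)
    apply algebra
    done
  have "\<rho> * S - S * R2 = S * (\<rho> - R2)"
    by (simp add: algebra_simps)
  also have "\<dots> = \<kappa> * (S * R1) * (1 - q ^ Suc (Suc m)) - \<kappa> * S * (1 - q ^ Suc m)"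
    unfolding scalar by (simp add: algebra_simps)
  finally show ?thesis
    unfolding gauss_certificate_def next_m next_j \<rho>_def[symmetric] S_def[symmetric] \<kappa>_def[symmetric] .
qed

lemma gauss_certificate_1:
  "alpha_coeff_ratio a q z (Suc i) * bailey_kernel a q z (Suc i) 0 = gauss_certificate a q z (Suc i) 1"
proof -
  define v where "v = q ^ i"
  define \<rho> where "\<rho> = alpha_coeff_ratio a q z (Suc i)"
  define \<kappa> where "\<kappa> = (\<rho> - 1) / (q * a / z - 1)"
  define R where "R = (1 - z * q * v) * (1 - q * v) * (q * a / z) / (1 - a * q^3 * v^2)"
  have nz: "1 - a * q^2 * v \<noteq> 0" "1 - q * a / z * q * v \<noteq> 0" "1 - a * q^3 * v^2 \<noteq> 0"
    using one_minus_aq_nonzero[of "Suc i"] one_minus_x_nonzero[of "Suc i"] one_minus_aq_nonzero[of "2 * Suc i"]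
    by (simp_all add: v_def power_add power_mult power2_eq_square power3_eq_cube power_Suc mult_ac)
  have "bailey_kernel a q z (Suc i) 1 * (1 - q) = bailey_kernel a q z (Suc i) 0 * R"
    using bailey_kernel_Suc[of i 0] one_minus_q_nonzero[of 0]
    by (simp add: R_def v_def power_add power_mult power2_eq_square power3_eq_cube power_Suc mult_ac)
  moreover have "\<kappa> * R = \<rho>"
    using nz x_minus_1_nonzero
    unfolding \<kappa>_def \<rho>_def alpha_coeff_ratio_def R_def
    apply (simp add: divide_simps power2_eq_square power_Suc flip: v_def)
    apply algebra
    done
  ultimately show ?thesis
    unfolding gauss_certificate_def \<rho>_def[symmetric] \<kappa>_def[symmetric]
    by (metis mult.assoc mult.commute power_one_right)
qed

lemma qpoch_uniform_lower_bound:
  obtains L where "L > 0" "\<And>n. L \<le> norm (qpoch q q n)" "\<And>k n. L \<le> norm (qpoch (a * q * q ^ k) q n)"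
proof -
  obtain L1 where L1: "L1 > 0" "\<And>n. L1 \<le> norm (qpoch q q n)"
    using qpoch_bounded_below[OF norm_q_less_1 qpoch_q_q_nonzero] by blast
  obtain L2 where L2: "L2 > 0" "\<And>n. L2 \<le> norm (qpoch (a * q) q n)"
    using qpoch_bounded_below[OF norm_q_less_1 qpoch_aq_nonzero] by blast
  define E where "E = exp (norm (a * q) / (1 - norm q))"
  have "L2 / E \<le> norm (qpoch (a * q * q ^ k) q n)" for k n
  proof -
    have "L2 \<le> norm (qpoch (a * q) q (k + n))"
      by (rule L2)
    also have "\<dots> = norm (qpoch (a * q) q k) * norm (qpoch (a * q * q ^ k) q n)"
      by (simp add: qpoch_add norm_mult)
    also have "\<dots> \<le> E * norm (qpoch (a * q * q ^ k) q n)"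
      unfolding E_def by (intro mult_right_mono norm_qpoch_le norm_q_less_1) auto
    finally show ?thesis
      by (simp add: E_def divide_le_eq mult.commute)
  qed
  then show ?thesis
    using L1 L2 by (intro that[of "min L1 (L2 / E)"]) (auto simp: E_def min.coboundedI1 min.coboundedI2)
qed

lemma bailey_kernel_1_telescope:
  "(1 - q * a / z) * bailey_kernel a q z 1 m
     = qpoch z q (Suc m) * (q * a / z) ^ Suc m / qpoch (a * q) q (Suc m)
       - qpoch z q (Suc (Suc m)) * (q * a / z) ^ Suc (Suc m) / qpoch (a * q) q (Suc (Suc m))"
proof -
  define x where "x = q * a / z"
  define P where "P = qpoch z q (Suc m) * x ^ Suc m / qpoch (a * q) q (Suc m)"
  define d where "d = 1 - a * q * q ^ Suc m"
  have "d \<noteq> 0"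
    unfolding d_def by (rule one_minus_aq_nonzero)
  have kernel: "bailey_kernel a q z 1 m = P / d"
    unfolding bailey_kernel_def P_def d_def x_def by (simp add: qpoch_Suc) (simp only: mult.assoc)
  have next_term: "qpoch z q (Suc (Suc m)) * x ^ Suc (Suc m) / qpoch (a * q) q (Suc (Suc m))
      = P * (1 - z * q ^ Suc m) * x / d"
    unfolding P_def d_def by (simp add: qpoch_Suc)
  have "x * z = a * q"
    unfolding x_def by simp
  then show ?thesis
    unfolding x_def[symmetric] P_def[symmetric] kernel next_term using \<open>d \<noteq> 0\<close>
    by (simp add: d_def field_simps)
qed

lemma bailey_kernel_1_primitive_tendsto_0: "(\<lambda>n. qpoch z q n * (q * a / z) ^ n / qpoch (a * q) q n) \<longlonglongrightarrow> 0"
proof -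
  obtain L where L: "L > 0" "\<And>n. L \<le> norm (qpoch q q n)" "\<And>k n. L \<le> norm (qpoch (a * q * q ^ k) q n)"
    using qpoch_uniform_lower_bound by blast
  define E where "E = exp (norm z / (1 - norm q))"
  have "norm (qpoch z q n * (q * a / z) ^ n / qpoch (a * q) q n) \<le> E / L * norm (q * a / z) ^ n" for n
  proof -
    have "norm (qpoch z q n * (q * a / z) ^ n / qpoch (a * q) q n)
        = norm (qpoch z q n) * norm (q * a / z) ^ n / norm (qpoch (a * q) q n)"
      by (simp add: norm_mult norm_divide norm_power)
    also have "\<dots> \<le> E * norm (q * a / z) ^ n / L"
      unfolding E_def using L(1) L(3)[of 0] norm_q_less_1 by (intro frac_le mult_right_mono norm_qpoch_le) auto
    finally show ?thesis
      by simp
  qed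
  moreover have "(\<lambda>n. E / L * norm (q * a / z) ^ n) \<longlonglongrightarrow> 0"
    using norm_x_less_1 by (intro tendsto_mult_right_zero LIMSEQ_power_zero) simp
  ultimately show ?thesis
    by (rule Lim_null_comparison[OF always_eventually[OF allI]])
qed

lemma bailey_kernel_1_sums: "(\<lambda>m. bailey_kernel a q z 1 m) sums alpha_coeff a q z 1"
proof -
  define x where "x = q * a / z"
  define V where "V n = qpoch z q n * x ^ n / qpoch (a * q) q n" for n
  have "1 - x \<noteq> 0"
    using x_minus_1_nonzero unfolding x_def by (metis right_minus_eq)
  have "(1 - x) * (\<Sum>m<M. bailey_kernel a q z 1 m) = V 1 - V (Suc M)" for M
    unfolding sum_distrib_left V_def x_def bailey_kernel_1_telescope
    by (subst sum_lessThan_telescope'[of "\<lambda>m. V (Suc m)", unfolded V_def x_def]) simp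
  then have "(\<Sum>m<M. bailey_kernel a q z 1 m) = (V 1 - V (Suc M)) / (1 - x)" for M
    using \<open>1 - x \<noteq> 0\<close> by (simp add: eq_divide_eq mult.commute)
  moreover have "(\<lambda>M. (V 1 - V (Suc M)) / (1 - x)) \<longlonglongrightarrow> (V 1 - 0) / (1 - x)"
    using \<open>1 - x \<noteq> 0\<close> bailey_kernel_1_primitive_tendsto_0 unfolding V_def x_def
    by (intro tendsto_intros LIMSEQ_Suc[of "\<lambda>n. qpoch z q n * (q * a / z) ^ n / qpoch (a * q) q n"])
  moreover have "(V 1 - 0) / (1 - x) = alpha_coeff a q z 1"
    unfolding V_def alpha_coeff_def x_def[symmetric] by (simp add: qpoch_def mult.commute)
  ultimately show ?thesis
    unfolding sums_def by simp
qed

lemma bailey_kernel_partial_sum_Suc: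
  "(\<Sum>m<M. bailey_kernel a q z (Suc (Suc i)) m)
     = alpha_coeff_ratio a q z (Suc i) * (\<Sum>m<Suc M. bailey_kernel a q z (Suc i) m)
       - gauss_certificate a q z (Suc i) (Suc M)"
proof -
  define \<rho> where "\<rho> = alpha_coeff_ratio a q z (Suc i)"
  define C where "C = gauss_certificate a q z (Suc i)"
  have telescope: "(\<Sum>m<M. C (Suc (Suc m)) - C (Suc m)) = C (Suc M) - C 1"
    by (induct M) simp_all
  have "(\<Sum>m<M. bailey_kernel a q z (Suc (Suc i)) m)
      = (\<Sum>m<M. \<rho> * bailey_kernel a q z (Suc i) (Suc m) - (C (Suc (Suc m)) - C (Suc m)))"
    unfolding \<rho>_def C_def by (simp add: gauss_certificate_telescope[symmetric])
  also have "\<dots> = \<rho> * (\<Sum>m<M. bailey_kernel a q z (Suc i) (Suc m)) - (C (Suc M) - C 1)"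
    using telescope by (simp add: sum_subtractf sum_distrib_left)
  also have "\<dots> = \<rho> * (\<Sum>m<Suc M. bailey_kernel a q z (Suc i) m) - C (Suc M)"
    using gauss_certificate_1[of i] unfolding \<rho>_def C_def sum.lessThan_Suc_shift
    by (simp add: algebra_simps del: sum.lessThan_Suc)
  finally show ?thesis
    unfolding \<rho>_def C_def .
qed

lemma bailey_kernel_sums: "(\<lambda>m. bailey_kernel a q z (Suc i) m) sums alpha_coeff a q z (Suc i)"
proof (induction i)
  case 0
  then show ?case
    using bailey_kernel_1_sums by simp
next
  case (Suc i)
  define \<rho> where "\<rho> = alpha_coeff_ratio a q z (Suc i)"
  define \<kappa> where "\<kappa> = (\<rho> - 1) / (q * a / z - 1)"
  have "(\<lambda>m. bailey_kernel a q z (Suc i) m) \<longlonglongrightarrow> 0"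
    using Suc.IH by (intro summable_LIMSEQ_zero sums_summable)
  then have "(\<lambda>M. gauss_certificate a q z (Suc i) (Suc M)) \<longlonglongrightarrow> \<kappa> * 0 * (1 - 0)"
    unfolding gauss_certificate_def \<rho>_def[symmetric] \<kappa>_def[symmetric]
    by (intro tendsto_intros LIMSEQ_Suc[of "\<lambda>m. bailey_kernel a q z (Suc i) m"]
        LIMSEQ_Suc[OF LIMSEQ_power_zero[OF norm_q_less_1]])
  moreover have "(\<lambda>M. \<Sum>m<Suc M. bailey_kernel a q z (Suc i) m) \<longlonglongrightarrow> alpha_coeff a q z (Suc i)"
    using Suc.IH unfolding sums_def by (rule LIMSEQ_Suc)
  ultimately have "(\<lambda>M. \<rho> * (\<Sum>m<Suc M. bailey_kernel a q z (Suc i) m) - gauss_certificate a q z (Suc i) (Suc M))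
      \<longlonglongrightarrow> \<rho> * alpha_coeff a q z (Suc i) - \<kappa> * 0 * (1 - 0)"
    by (intro tendsto_intros)
  then show ?case
    unfolding sums_def bailey_kernel_partial_sum_Suc \<rho>_def by (simp add: alpha_coeff_Suc mult.commute)
qed

lemma bailey_kernel_factor:
  "bailey_kernel a q z (Suc i) m = alpha_coeff a q z (Suc i) * (q * a / z) ^ m *
     ((qpoch (z * q ^ Suc i) q m * qpoch (q * q ^ i) q m * qpoch (q * a) q (Suc i) * qpoch (q * a / z) q (Suc i))
       / (qpoch q q m * qpoch (a * q) q (2 * Suc i + m)))"
proof -
  have "Suc i + m - 1 = i + m"
    by simp
  moreover have "qpoch z q (Suc i + m) = qpoch z q (Suc i) * qpoch (z * q ^ Suc i) q m"
    and "qpoch q q (i + m) = qpoch q q i * qpoch (q * q ^ i) q m"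
    by (rule qpoch_add)+
  ultimately show ?thesis
    unfolding bailey_kernel_def alpha_coeff_def power_add by (simp add: field_simps)
qed

lemma bailey_kernel_bound:
  obtains C where "0 \<le> C"
    "\<And>i m. norm (bailey_kernel a q z (Suc i) m) \<le> C * norm (alpha_coeff a q z (Suc i)) * norm (q * a / z) ^ m"
proof -
  obtain L where L: "L > 0" "\<And>n. L \<le> norm (qpoch q q n)" "\<And>k n. L \<le> norm (qpoch (a * q * q ^ k) q n)"
    using qpoch_uniform_lower_bound by blast
  define R where "R = 1 + norm z + norm (q * a)"
  define E where "E = exp (R / (1 - norm q))"
  have E: "norm w \<le> R \<Longrightarrow> norm (qpoch w q n) \<le> E" for w n
    unfolding E_def using norm_q_less_1 by (rule norm_qpoch_le)
  have power_le: "norm q ^ k \<le> 1" for k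
    using norm_q_less_1 by (simp add: power_le_one)
  have "norm (qpoch (z * q ^ Suc i) q m * qpoch (q * q ^ i) q m * qpoch (q * a) q (Suc i) * qpoch (q * a / z) q (Suc i))
      \<le> E * E * E * E" for i m
  proof -
    have R: "1 \<le> R" "norm z \<le> R" "norm (q * a) \<le> R"
      unfolding R_def by auto
    have "norm (z * q ^ Suc i) \<le> norm z * 1" "norm (q * q ^ i) \<le> 1"
      using mult_left_le[OF power_le[of "Suc i"], of "norm z"] power_le[of "Suc i"]
      by (simp_all only: norm_mult norm_power power_Suc) auto
    then have "norm (z * q ^ Suc i) \<le> R" "norm (q * q ^ i) \<le> R" "norm (q * a) \<le> R" "norm (q * a / z) \<le> R"
      using R norm_x_less_1 by auto
    note bounds = E[OF this(1)] E[OF this(2)] E[OF this(3)] E[OF this(4)]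
    show ?thesis
      unfolding norm_mult by (intro mult_mono bounds) (auto simp: E_def)
  qed
  moreover have "L * L \<le> norm (qpoch q q m * qpoch (a * q) q n)" for m n
    unfolding norm_mult using L(1,2) L(3)[of 0] by (intro mult_mono) auto
  ultimately have bound: "norm ((qpoch (z * q ^ Suc i) q m * qpoch (q * q ^ i) q m * qpoch (q * a) q (Suc i)
        * qpoch (q * a / z) q (Suc i)) / (qpoch q q m * qpoch (a * q) q (2 * Suc i + m)))
      \<le> E * E * E * E / (L * L)" for i m
    unfolding norm_divide using L(1) by (intro frac_le) (auto simp: E_def)
  have "norm (bailey_kernel a q z (Suc i) m)
      \<le> E * E * E * E / (L * L) * norm (alpha_coeff a q z (Suc i)) * norm (q * a / z) ^ m" for i m
    using mult_left_mono[OF bound[of i m], of "norm (alpha_coeff a q z (Suc i)) * norm (q * a / z) ^ m"]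
    unfolding bailey_kernel_factor[of i m] norm_mult norm_power by (simp add: mult_ac)
  then show ?thesis
    using L(1) by (intro that[of "E * E * E * E / (L * L)"]) (auto simp: E_def)
qed

lemma bailey_kernel_tail_bound:
  obtains C where "0 \<le> C" "\<And>i K. norm (alpha_coeff a q z (Suc i) - (\<Sum>m<K. bailey_kernel a q z (Suc i) m))
      \<le> C * norm (alpha_coeff a q z (Suc i)) * norm (q * a / z) ^ K"
proof -
  obtain C where C: "0 \<le> C"
    "\<And>i m. norm (bailey_kernel a q z (Suc i) m) \<le> C * norm (alpha_coeff a q z (Suc i)) * norm (q * a / z) ^ m"
    using bailey_kernel_bound by blast
  define r where "r = norm (q * a / z)"
  have r: "0 \<le> r" "r < 1"
    using norm_x_less_1 unfolding r_def by auto
  have "norm (alpha_coeff a q z (Suc i) - (\<Sum>m<K. bailey_kernel a q z (Suc i) m))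
      \<le> C / (1 - r) * norm (alpha_coeff a q z (Suc i)) * r ^ K" for i K
  proof -
    define c where "c = C * norm (alpha_coeff a q z (Suc i)) * r ^ K"
    have tail: "(\<lambda>m. bailey_kernel a q z (Suc i) (m + K))
        sums (alpha_coeff a q z (Suc i) - (\<Sum>m<K. bailey_kernel a q z (Suc i) m))"
      by (rule sums_split_initial_segment[OF bailey_kernel_sums])
    have geometric: "(\<lambda>m. c * r ^ m) sums (c * (1 / (1 - r)))"
      using r by (intro sums_mult geometric_sums) simp
    have "norm (alpha_coeff a q z (Suc i) - (\<Sum>m<K. bailey_kernel a q z (Suc i) m))
        = norm (\<Sum>m. bailey_kernel a q z (Suc i) (m + K))"
      using sums_unique[OF tail] by simp
    also have "\<dots> \<le> (\<Sum>m. c * r ^ m)"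
    proof (rule norm_suminf_le)
      show "norm (bailey_kernel a q z (Suc i) (m + K)) \<le> c * r ^ m" for m
        using C(2)[of i "m + K"] unfolding c_def r_def by (simp add: power_add mult_ac)
      show "summable (\<lambda>m. c * r ^ m)"
        using geometric by (rule sums_summable)
    qed
    also have "\<dots> = c * (1 / (1 - r))"
      by (rule sums_unique[OF geometric, symmetric])
    finally show ?thesis
      unfolding c_def by simp
  qed
  then show ?thesis
    using C(1) r by (intro that[of "C / (1 - r)"]) (simp_all add: r_def)
qed

lemma bailey_setup_shift: "bailey_setup (a * q ^ k) q z"
proof
  show "norm q < 1"
    by (rule norm_q_less_1)
  have "norm (q * (a * q ^ k)) = norm (q * a) * norm q ^ k"
    by (simp add: norm_mult norm_power)
  also have "\<dots> \<le> norm (q * a)"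
    using norm_q_less_1 by (intro mult_left_le) (auto simp: power_le_one)
  finally show "norm (q * (a * q ^ k)) < norm z"
    using norm_qa_less by simp
  fix n
  have "qpoch (a * q) q (k + n) = qpoch (a * q) q k * qpoch (a * q * q ^ k) q n"
    by (rule qpoch_add)
  then show "qpoch (a * q ^ k * q) q n \<noteq> 0"
    using qpoch_aq_nonzero[of "k + n"] by (auto simp: mult_ac)
  have "qpoch (q * a / z) q (k + n) = qpoch (q * a / z) q k * qpoch (q * a / z * q ^ k) q n"
    by (rule qpoch_add)
  then show "qpoch (q * (a * q ^ k) / z) q n \<noteq> 0"
    using qpoch_x_nonzero[of "k + n"] by (auto simp: mult_ac)
qed

lemma bailey_kernel_0_shift:
  "bailey_kernel a q z 0 (Suc n) - bailey_kernel (a * q) q z 0 (Suc n) = bailey_kernel a q z 1 n"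
proof -
  define x where "x = q * a / z"
  define P where "P = qpoch z q (Suc n) * qpoch q q n * x ^ Suc n / (qpoch q q (Suc n) * qpoch (a * q) q (Suc (Suc n)))"
  have split_last: "qpoch (a * q) q (Suc (Suc n)) = qpoch (a * q) q (Suc n) * (1 - a * q * q ^ Suc n)"
    by (rule qpoch_Suc)
  have split_first: "qpoch (a * q) q (Suc (Suc n)) = (1 - a * q) * qpoch (a * q * q) q (Suc n)"
    using qpoch_add[of "a * q" q 1 "Suc n"] by (simp add: qpoch_def)
  have "1 - a * q \<noteq> 0" "qpoch (a * q * q) q (Suc n) \<noteq> 0"
    using split_first qpoch_aq_nonzero[of "Suc (Suc n)"] by auto
  then have shifted: "bailey_kernel (a * q) q z 0 (Suc n) = P * (q ^ Suc n * (1 - a * q))"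
    unfolding bailey_kernel_def P_def x_def split_first by (simp add: field_simps power_mult_distrib)
  have unshifted: "bailey_kernel a q z 0 (Suc n) = P * (1 - a * q * q ^ Suc n)"
    unfolding bailey_kernel_def P_def x_def split_last using one_minus_aq_nonzero[of "Suc n"]
    by (simp add: field_simps)
  have first: "bailey_kernel a q z 1 n = P * (1 - q * q ^ n)"
    unfolding bailey_kernel_def P_def x_def qpoch_Suc[of q q n] using one_minus_q_nonzero[of n]
    by (simp add: field_simps)
  show ?thesis
    unfolding shifted unshifted first by (simp add: algebra_simps)
qed

lemma norm_shifted_x_power_le:
  "norm (q * (a * q ^ k) / z) ^ Suc n \<le> norm q ^ k * norm (q * a / z) ^ Suc n"
proof -
  have "norm (q * (a * q ^ k) / z) = norm q ^ k * norm (q * a / z)"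
    by (simp add: norm_mult norm_divide norm_power field_simps)
  then have "norm (q * (a * q ^ k) / z) ^ Suc n = (norm q ^ k) ^ Suc n * norm (q * a / z) ^ Suc n"
    by (simp only: power_mult_distrib)
  also have "\<dots> \<le> norm q ^ k * norm (q * a / z) ^ Suc n"
    using power_decreasing[of 1 "Suc n" "norm q ^ k"] norm_q_less_1
    by (intro mult_right_mono) (simp_all add: power_le_one del: power_Suc)
  finally show ?thesis .
qed

lemma bailey_kernel_0_bound:
  obtains C where "\<And>k n. norm (bailey_kernel (a * q ^ k) q z 0 (Suc n)) \<le> C * norm q ^ k * norm (q * a / z) ^ Suc n"
proof -
  obtain L where L: "L > 0" "\<And>n. L \<le> norm (qpoch q q n)" "\<And>k n. L \<le> norm (qpoch (a * q * q ^ k) q n)"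
    using qpoch_uniform_lower_bound by blast
  define E where "E = exp ((1 + norm z) / (1 - norm q))"
  have "norm (bailey_kernel (a * q ^ k) q z 0 (Suc n))
      \<le> E * E / (L * L) * (norm q ^ k * norm (q * a / z) ^ Suc n)" for k n
  proof -
    have numerator: "norm (qpoch z q (Suc n)) * norm (qpoch q q n) \<le> E * E"
    proof -
      have "norm q \<le> 1 + norm z"
        using norm_q_less_1 norm_ge_zero[of z] by linarith
      then show ?thesis
        unfolding E_def using norm_q_less_1 by (intro mult_mono norm_qpoch_le) auto
    qed
    have "L * L \<le> norm (qpoch q q (Suc n)) * norm (qpoch (a * q * q ^ k) q (Suc n))"
      using L by (intro mult_mono) auto
    then have denominator: "L * L \<le> norm (qpoch q q (Suc n)) * norm (qpoch (a * q ^ k * q) q (Suc n))"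
      by (simp add: mult_ac)
    have "norm (bailey_kernel (a * q ^ k) q z 0 (Suc n))
        = norm (qpoch z q (Suc n)) * norm (qpoch q q n)
            / (norm (qpoch q q (Suc n)) * norm (qpoch (a * q ^ k * q) q (Suc n)))
          * norm (q * (a * q ^ k) / z) ^ Suc n"
      unfolding bailey_kernel_def by (simp add: norm_mult norm_divide norm_power)
    also have "\<dots> \<le> E * E / (L * L) * (norm q ^ k * norm (q * a / z) ^ Suc n)"
      using L(1) by (intro mult_mono frac_le numerator denominator norm_shifted_x_power_le) auto
    finally show ?thesis .
  qed
  then show ?thesis
    by (intro that[of "E * E / (L * L)"]) (simp add: mult.assoc)
qed

lemma summable_bailey_kernel_0: "summable (\<lambda>n. bailey_kernel (a * q ^ k) q z 0 (Suc n))"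
proof -
  obtain C where C: "\<And>k n. norm (bailey_kernel (a * q ^ k) q z 0 (Suc n)) \<le> C * norm q ^ k * norm (q * a / z) ^ Suc n"
    using bailey_kernel_0_bound by blast
  have "summable (\<lambda>n. C * norm q ^ k * norm (q * a / z) ^ Suc n)"
    using norm_x_less_1 by (intro summable_mult) (simp add: summable_Suc_iff summable_geometric)
  then show ?thesis
    by (rule summable_comparison_test') (rule C)
qed

lemma bailey_kernel_0_suminf_shift:
  "(\<Sum>n. bailey_kernel (a * q ^ k) q z 0 (Suc n)) - (\<Sum>n. bailey_kernel (a * q ^ Suc k) q z 0 (Suc n))
     = alpha_coeff (a * q ^ k) q z 1"
proof -
  interpret shifted: bailey_setup "a * q ^ k" q z
    by (rule bailey_setup_shift)
  have shift_eq: "a * q ^ k * q = a * q ^ Suc k"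
    by (simp add: mult_ac)
  have "bailey_kernel (a * q ^ k) q z 0 (Suc n) - bailey_kernel (a * q ^ Suc k) q z 0 (Suc n)
      = bailey_kernel (a * q ^ k) q z 1 n" for n
    using shifted.bailey_kernel_0_shift[of n] unfolding shift_eq .
  then have "(\<lambda>n. bailey_kernel (a * q ^ k) q z 0 (Suc n) - bailey_kernel (a * q ^ Suc k) q z 0 (Suc n))
      sums alpha_coeff (a * q ^ k) q z 1"
    using shifted.bailey_kernel_1_sums by simp
  moreover have "(\<lambda>n. bailey_kernel (a * q ^ k) q z 0 (Suc n) - bailey_kernel (a * q ^ Suc k) q z 0 (Suc n))
      sums ((\<Sum>n. bailey_kernel (a * q ^ k) q z 0 (Suc n)) - (\<Sum>n. bailey_kernel (a * q ^ Suc k) q z 0 (Suc n)))"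
    by (intro sums_diff summable_sums summable_bailey_kernel_0)
  ultimately show ?thesis
    by (rule sums_unique2[symmetric])
qed

lemma bailey_kernel_0_suminf_tendsto_0: "(\<lambda>k. \<Sum>n. bailey_kernel (a * q ^ k) q z 0 (Suc n)) \<longlonglongrightarrow> 0"
proof -
  obtain C where C: "\<And>k n. norm (bailey_kernel (a * q ^ k) q z 0 (Suc n)) \<le> C * norm q ^ k * norm (q * a / z) ^ Suc n"
    using bailey_kernel_0_bound by blast
  define r where "r = norm (q * a / z)"
  have geometric: "(\<lambda>n. C * norm q ^ k * r ^ Suc n) sums (C * norm q ^ k * (r / (1 - r)))" for k
    using norm_x_less_1 sums_mult[OF geometric_sums[of r], of r] unfolding r_def
    by (intro sums_mult) simp
  have "norm (\<Sum>n. bailey_kernel (a * q ^ k) q z 0 (Suc n)) \<le> C * norm q ^ k * (r / (1 - r))" for k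
  proof -
    have "norm (\<Sum>n. bailey_kernel (a * q ^ k) q z 0 (Suc n)) \<le> (\<Sum>n. C * norm q ^ k * r ^ Suc n)"
      using C geometric[THEN sums_summable] unfolding r_def by (rule norm_suminf_le)
    also have "\<dots> = C * norm q ^ k * (r / (1 - r))"
      by (rule sums_unique[OF geometric, symmetric])
    finally show ?thesis .
  qed
  moreover have "(\<lambda>k. C * norm q ^ k * (r / (1 - r))) \<longlonglongrightarrow> 0"
    using norm_q_less_1 by (intro tendsto_mult_left_zero tendsto_mult_right_zero LIMSEQ_power_zero) simp
  ultimately show ?thesis
    by (rule Lim_null_comparison[OF always_eventually[OF allI]])
qed

lemma alpha_coeff_1_sums: "(\<lambda>k. alpha_coeff (a * q ^ k) q z 1) sums (\<Sum>n. bailey_kernel a q z 0 (Suc n))"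
proof -
  define S where "S k = (\<Sum>n. bailey_kernel (a * q ^ k) q z 0 (Suc n))" for k
  have "(\<lambda>K. S 0 - S K) \<longlonglongrightarrow> S 0 - 0"
    unfolding S_def by (intro tendsto_diff tendsto_const bailey_kernel_0_suminf_tendsto_0)
  moreover have "S 0 - S K = (\<Sum>k<K. alpha_coeff (a * q ^ k) q z 1)" for K
    unfolding S_def bailey_kernel_0_suminf_shift[symmetric] by (rule sum_lessThan_telescope'[symmetric])
  ultimately show ?thesis
    unfolding sums_def S_def by simp
qed

lemma bailey_tail_convolution_tendsto_0:
  assumes summable_alpha: "summable (\<lambda>n. norm (aterm z a q \<alpha> (Suc n)))"
  shows "(\<lambda>N. \<Sum>i<N. \<alpha> (Suc i) * (alpha_coeff a q z (Suc i) - (\<Sum>m<N - i. bailey_kernel a q z (Suc i) m)))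
    \<longlonglongrightarrow> 0"
proof -
  define T where "T i K = alpha_coeff a q z (Suc i) - (\<Sum>m<K. bailey_kernel a q z (Suc i) m)" for i K
  define r where "r = norm (q * a / z)"
  obtain C where C: "0 \<le> C" "\<And>i K. norm (T i K) \<le> C * norm (alpha_coeff a q z (Suc i)) * r ^ K"
    unfolding T_def r_def using bailey_kernel_tail_bound by blast
  have "norm (\<alpha> (Suc i) * T i (N - i)) \<le> C * (norm (aterm z a q \<alpha> (Suc i)) * r ^ (N - i))" for i N
    using mult_left_mono[OF C(2)[of i "N - i"] norm_ge_zero[of "\<alpha> (Suc i)"]]
    by (simp add: aterm_eq_alpha_coeff norm_mult mult_ac)
  then have "norm (\<Sum>i<N. \<alpha> (Suc i) * T i (N - i))
      \<le> (\<Sum>i<N. C * (norm (aterm z a q \<alpha> (Suc i)) * r ^ (N - i)))" for N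
    by (intro order_trans[OF norm_sum] sum_mono)
  also have "\<dots> N \<le> C * (\<Sum>i\<le>N. norm (aterm z a q \<alpha> (Suc i)) * r ^ (N - i))" for N
    unfolding sum_distrib_left[symmetric] using C(1) by (intro mult_left_mono sum_mono2) auto
  finally have "norm (\<Sum>i<N. \<alpha> (Suc i) * T i (N - i))
      \<le> C * (\<Sum>i\<le>N. norm (aterm z a q \<alpha> (Suc i)) * r ^ (N - i))" for N .
  moreover have "(\<lambda>N. C * (\<Sum>i\<le>N. norm (aterm z a q \<alpha> (Suc i)) * r ^ (N - i))) \<longlonglongrightarrow> 0"
    using summable_alpha norm_x_less_1 unfolding r_def
    by (intro tendsto_mult_right_zero convolution_geometric_tendsto_0) auto
  ultimately show ?thesis
    unfolding T_def by (rule Lim_null_comparison[OF always_eventually[OF allI]])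
qed

lemma bterm_sums:
  assumes pair: "bailey_pair a q \<alpha> \<beta>"
    and summable_alpha: "summable (\<lambda>n. norm (aterm z a q \<alpha> (Suc n)))"
  shows "(\<lambda>n. bterm z a q \<beta> (Suc n))
    sums ((\<Sum>n. bailey_kernel a q z 0 (Suc n)) + (\<Sum>n. aterm z a q \<alpha> (Suc n)))"
proof -
  have kernel: "(\<lambda>N. \<Sum>k<N. bailey_kernel a q z 0 (Suc k)) \<longlonglongrightarrow> (\<Sum>n. bailey_kernel a q z 0 (Suc n))"
    using summable_bailey_kernel_0[of 0] by (simp add: summable_LIMSEQ)
  have alpha: "(\<lambda>N. \<Sum>i<N. aterm z a q \<alpha> (Suc i)) \<longlonglongrightarrow> (\<Sum>n. aterm z a q \<alpha> (Suc n))"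
    using summable_norm_cancel[OF summable_alpha] by (rule summable_LIMSEQ)
  show ?thesis
    unfolding sums_def bterm_partial_sum[OF pair]
    using tendsto_diff[OF tendsto_add[OF kernel alpha] bailey_tail_convolution_tendsto_0[OF summable_alpha]]
    by simp
qed

lemma bterm_minus_aterm_sums:
  assumes "bailey_pair a q \<alpha> \<beta>" "summable (\<lambda>n. norm (aterm z a q \<alpha> (Suc n)))"
  shows "(\<lambda>k. alpha_coeff (a * q ^ k) q z 1)
    sums ((\<Sum>n. bterm z a q \<beta> (Suc n)) - (\<Sum>n. aterm z a q \<alpha> (Suc n)))"
proof -
  have "(\<Sum>n. bailey_kernel a q z 0 (Suc n))
      = (\<Sum>n. bterm z a q \<beta> (Suc n)) - (\<Sum>n. aterm z a q \<alpha> (Suc n))"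
    using sums_unique[OF bterm_sums[OF assms]] by (simp add: eq_diff_eq)
  then show ?thesis
    using alpha_coeff_1_sums by simp
qed

end

lemma alpha_coeff_1_eq: "alpha_coeff b q z 1 = (1 - z) * (q * b / z) / ((1 - q * b) * (1 - q * b / z))"
  by (simp add: alpha_coeff_def qpoch_def)

lemma alpha_coeff_1_even_part:
  fixes b q z :: complex
  assumes "z \<noteq> 0" "1 - q * b \<noteq> 0" "1 + q * b \<noteq> 0" "1 - q * b / z \<noteq> 0" "1 + q * b / z \<noteq> 0"
  shows "alpha_coeff b q z 1 + alpha_coeff (- b) q z 1 = 2 * alpha_coeff (b ^ 2) (q ^ 2) (z ^ 2) 1"
proof -
  have "1 - q ^ 2 * b ^ 2 = (1 - q * b) * (1 + q * b)" "1 - q ^ 2 * b ^ 2 / z ^ 2 = (1 - q * b / z) * (1 + q * b / z)"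
    by (simp_all add: power2_eq_square algebra_simps)
  then have "1 - q ^ 2 * b ^ 2 \<noteq> 0" "1 - q ^ 2 * b ^ 2 / z ^ 2 \<noteq> 0"
    using assms by simp_all
  then show ?thesis
    using assms unfolding alpha_coeff_1_eq
    apply (simp add: divide_simps)
    apply algebra
    done
qed

theorem corollary2p5:
  fixes \<alpha> \<beta> :: "complex \<Rightarrow> complex \<Rightarrow> nat \<Rightarrow> complex" and a q z :: complex
  assumes hq: "norm q < 1"
    and hz: "norm (q * a) < norm z"
    and bp1: "bailey_pair a q (\<alpha> a q) (\<beta> a q)"
    and bp2: "bailey_pair (- a) q (\<alpha> (- a) q) (\<beta> (- a) q)"
    and bp3: "bailey_pair (a ^ 2) (q ^ 2) (\<alpha> (a ^ 2) (q ^ 2)) (\<beta> (a ^ 2) (q ^ 2))"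
    and nz: "\<forall>n. qpoch (a * q) q n \<noteq> 0 \<and> qpoch (- a * q) q n \<noteq> 0
               \<and> qpoch (a ^ 2 * q ^ 2) (q ^ 2) n \<noteq> 0
               \<and> qpoch (q * a / z) q n \<noteq> 0 \<and> qpoch (- q * a / z) q n \<noteq> 0
               \<and> qpoch (q ^ 2 * a ^ 2 / z ^ 2) (q ^ 2) n \<noteq> 0"
    and sB1: "summable (\<lambda>n. norm (bterm z a q (\<beta> a q) (Suc n)))"
    and sB2: "summable (\<lambda>n. norm (bterm z (- a) q (\<beta> (- a) q) (Suc n)))"
    and sB3: "summable (\<lambda>n. norm (bterm (z ^ 2) (a ^ 2) (q ^ 2) (\<beta> (a ^ 2) (q ^ 2)) (Suc n)))"
    and sA1: "summable (\<lambda>n. norm (aterm z a q (\<alpha> a q) (Suc n)))"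
    and sA2: "summable (\<lambda>n. norm (aterm z (- a) q (\<alpha> (- a) q) (Suc n)))"
    and sA3: "summable (\<lambda>n. norm (aterm (z ^ 2) (a ^ 2) (q ^ 2) (\<alpha> (a ^ 2) (q ^ 2)) (Suc n)))"
  shows "(\<Sum>n. bterm z a q (\<beta> a q) (Suc n)) + (\<Sum>n. bterm z (- a) q (\<beta> (- a) q) (Suc n))
           - 2 * (\<Sum>n. bterm (z ^ 2) (a ^ 2) (q ^ 2) (\<beta> (a ^ 2) (q ^ 2)) (Suc n))
         = (\<Sum>n. aterm z a q (\<alpha> a q) (Suc n)) + (\<Sum>n. aterm z (- a) q (\<alpha> (- a) q) (Suc n))
           - 2 * (\<Sum>n. aterm (z ^ 2) (a ^ 2) (q ^ 2) (\<alpha> (a ^ 2) (q ^ 2)) (Suc n))"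
proof -
  interpret plus: bailey_setup a q z
    using hq hz nz by unfold_locales auto
  interpret minus: bailey_setup "- a" q z
    using hq hz nz by unfold_locales auto
  have "norm q ^ 2 < 1" "norm (q * a) ^ 2 < norm z ^ 2"
    using hq hz by (simp_all add: power_strict_mono abs_square_less_1)
  then interpret square: bailey_setup "a ^ 2" "q ^ 2" "z ^ 2"
    using nz by unfold_locales (auto simp: norm_power norm_mult power_mult_distrib)
  have "alpha_coeff (a * q ^ k) q z 1 + alpha_coeff (- a * q ^ k) q z 1
      = 2 * alpha_coeff (a ^ 2 * (q ^ 2) ^ k) (q ^ 2) (z ^ 2) 1" for k
    using power_mult[of q k 2, symmetric] power_mult[of q 2 k] alpha_coeff_1_even_part[where b = "a * q ^ k"]
      plus.one_minus_aq_nonzero[of k] minus.one_minus_aq_nonzero[of k]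
      plus.one_minus_x_nonzero[of k] minus.one_minus_x_nonzero[of k]
    by (simp add: power_mult_distrib mult_ac)
  then have "(\<lambda>k. alpha_coeff (a * q ^ k) q z 1 + alpha_coeff (- a * q ^ k) q z 1
      - 2 * alpha_coeff (a ^ 2 * (q ^ 2) ^ k) (q ^ 2) (z ^ 2) 1) sums 0"
    by simp
  from sums_unique2[OF this sums_diff[OF sums_add[OF plus.bterm_minus_aterm_sums[OF bp1 sA1]
      minus.bterm_minus_aterm_sums[OF bp2 sA2]] sums_mult[OF square.bterm_minus_aterm_sums[OF bp3 sA3]]]]
  show ?thesis
    by (simp add: algebra_simps)
qed

end
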